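(* Let $p(z)=\prod_{j=1}^m (z-\alpha_j)^{b_j}$ be a polynomial with real coefficients, where $\alpha_1,\dots,\alpha_m$ are distinct complex numbers with $\Re(\alpha_j)<0$ and $b_j\in\mathbb N$. Let $q$ be a polynomial with real coefficients, $\deg(q)<\deg(p)$, having no common zero with $p$. For $t\in(0,1]$ let $F_t(z)=q(z)\,t^{-z-1}$ for $\Re(z)<0$, where $t^{-z-1}=\exp((-z-1)\log t)$, and define $$w(t)=F_t[\underbrace{\alpha_1,\ldots,\alpha_1}_{b_1\text{ times}},\underbrace{\alpha_2,\ldots,\alpha_2}_{b_2\text{ times}},\ldots,\underbrace{\alpha_m,\ldots,\alpha_m}_{b_m\text{ times}}],\qquad t\in(0,1].$$ Then $w$ is a real-valued continuous function on $(0,1]$, Lebesgue integrable on $(0,1]$, and $$\frac{q(n)}{p(n)}=\int_0^1 t^n w(t)\,dt\quad\text{for all } n\in\mathbb Z_+ .$$ (Thus $w$ is the weight function $w_{q,p}$ of the sequence $(q(n)/p(n))_{n\in\mathbb Z_+}$.)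
   Context: Divided differences: for a function $F$ and distinct complex numbers $x_1,\dots,x_m$, $F[x_1,\dots,x_m]=\sum_{j=1}^m F(x_j)/\prod_{k\neq j}(x_j-x_k)$. With repeated arguments, $F[\underbrace{x_1,\ldots,x_1}_{r_1+1},\ldots,\underbrace{x_m,\ldots,x_m}_{r_m+1}]:=\frac{1}{r_1!\cdots r_m!}\frac{\partial^{r_1+\cdots+r_m}}{\partial x_1^{r_1}\cdots\partial x_m^{r_m}}F[x_1,\dots,x_m]$, the derivative being evaluated at the given distinct points. *)

theory Defs
  imports "HOL-Analysis.Analysis" "HOL-Computational_Algebra.Polynomial"
begin

definition divdiff :: "(complex \<Rightarrow> complex) \<Rightarrow> nat \<Rightarrow> (nat \<Rightarrow> complex) \<Rightarrow> complex" where
  "divdiff F m x = (\<Sum>j<m. F (x j) / (\<Prod>k\<in>{..<m} - {j}. (x j - x k)))"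

definition cpartial :: "nat \<Rightarrow> ((nat \<Rightarrow> complex) \<Rightarrow> complex) \<Rightarrow> (nat \<Rightarrow> complex) \<Rightarrow> complex" where
  "cpartial j G x = deriv (\<lambda>z. G (x(j := z))) (x j)"

definition mixed_partial :: "(nat \<Rightarrow> nat) \<Rightarrow> nat \<Rightarrow> ((nat \<Rightarrow> complex) \<Rightarrow> complex) \<Rightarrow> (nat \<Rightarrow> complex) \<Rightarrow> complex" where
  "mixed_partial r m G = fold (\<lambda>j H. (cpartial j ^^ r j) H) [0..<m] G"

text \<open>Confluent divided difference: point x j repeated (r j + 1) times, j < m
  (the points x 0, ..., x (m-1) being distinct).\<close>
definition conf_divdiff :: "(complex \<Rightarrow> complex) \<Rightarrow> nat \<Rightarrow> (nat \<Rightarrow> complex) \<Rightarrow> (nat \<Rightarrow> nat) \<Rightarrow> complex" where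
  "conf_divdiff F m x r = mixed_partial r m (divdiff F m) x / (\<Prod>j<m. of_nat (fact (r j)))"

end

(*
  Choose a circle |u - c| = R in the half-plane Re u < 0 enclosing all the alpha j.
  Cauchy's integral formula, differentiated with respect to the nodes, turns the
  confluent divided difference of F_t into the contour integral
    w t = 1/(2 pi i) * integral over the circle of q(u) t^(-u-1) / p(u) du.
  Conjugation symmetry of the circle makes w real, and |t^(-u-1)| <= t^(-1-c-R) with
  -1-c-R > -1 makes it integrable on (0,1]. Integrating in t first, t^(n-u-1) has the
  primitive t^(n-u)/(n-u), which vanishes at 0, so the n-th moment is 1/(2 pi i) times
  the contour integral of q(u)/(p(u)(n-u)). This rational function is O(|u|^-2), so its
  residues sum to zero, and the residues inside the circle add up to minus the one at
  the outside pole n, which is -q(n)/p(n).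
*)

theory Submission
  imports Defs "HOL-Complex_Analysis.Complex_Analysis"
begin

lemma contour_integral_circlepath_eq_residues:
  fixes f :: "complex \<Rightarrow> complex"
  assumes "finite pts" and "f holomorphic_on UNIV - pts" and "r > 0"
    and "\<forall>p\<in>pts. dist c p \<noteq> r"
  shows "contour_integral (circlepath c r) f = 2 * pi * \<i> * (\<Sum>p\<in>pts \<inter> ball c r. residue f p)"
proof -
  have "contour_integral (circlepath c r) f
      = 2 * pi * \<i> * (\<Sum>p\<in>pts. winding_number (circlepath c r) p * residue f p)"
    by (rule Residue_theorem) (use assms in \<open>auto simp: dist_norm norm_minus_commute\<close>)
  also have "(\<Sum>p\<in>pts. winding_number (circlepath c r) p * residue f p) = (\<Sum>p\<in>pts \<inter> ball c r. residue f p)"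
  proof -
    have "winding_number (circlepath c r) p = (if p \<in> ball c r then 1 else 0)" if "p \<in> pts" for p
      using assms(3,4) that
      by (auto simp: winding_number_circlepath dist_norm norm_minus_commute
          intro!: winding_number_zero_outside[of _ "cball c r"])
    then show ?thesis
      using assms(1) by (auto simp: sum.inter_restrict intro!: sum.cong)
  qed
  finally show ?thesis .
qed

lemma sum_residues_eq_0:
  fixes f :: "complex \<Rightarrow> complex"
  assumes pts: "finite pts" and holo: "f holomorphic_on UNIV - pts"
    and decay: "((\<lambda>z. z * f z) \<longlongrightarrow> 0) at_infinity"
  shows "(\<Sum>p\<in>pts. residue f p) = 0"
proof (rule ccontr)
  define S where "S = (\<Sum>p\<in>pts. residue f p)"
  assume "S \<noteq> 0"
  then have "norm S / 2 > 0" by simp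
  with decay obtain B where B: "\<And>z. norm z \<ge> B \<Longrightarrow> norm (z * f z) \<le> norm S / 2"
    unfolding tendsto_iff eventually_at_infinity dist_norm by (metis diff_zero less_imp_le)
  obtain r where r: "r > max B (Max (insert 0 (norm ` pts)))"
    using gt_ex by blast
  have r_pos: "r > 0" and pts_inside: "\<And>p. p \<in> pts \<Longrightarrow> p \<in> ball 0 r"
    using r pts by (auto simp: Max_less_iff)
  have "contour_integral (circlepath 0 r) f = 2 * pi * \<i> * S"
    unfolding S_def using pts_inside
    by (subst contour_integral_circlepath_eq_residues[OF pts holo r_pos])
      (force simp: Int_absorb2 subset_iff)+
  moreover have "(f has_contour_integral contour_integral (circlepath 0 r) f) (circlepath 0 r)"
  proof (intro has_contour_integral_integral contour_integrable_holomorphic_simple[OF holo])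
    show "path_image (circlepath 0 r) \<subseteq> UNIV - pts"
      using pts_inside r_pos by fastforce
  qed (use pts in \<open>auto simp: finite_imp_closed open_Diff\<close>)
  moreover have "norm (f z) \<le> norm S / 2 / r" if "norm (z - 0) = r" for z
    using B[of z] r r_pos that by (simp add: norm_mult field_simps)
  ultimately have "norm (2 * pi * \<i> * S) \<le> norm S / 2 / r * (2 * pi * r)"
    using r_pos by (intro has_contour_integral_bound_circlepath) auto
  then show False
    using \<open>S \<noteq> 0\<close> r_pos pi_gt_zero by (simp add: norm_mult field_simps)
qed

lemma residue_divide_linear_factor:
  fixes P Q :: "complex poly"
  assumes N: "poly P N \<noteq> 0"
  shows "residue (\<lambda>u. poly Q u / (poly P u * (N - u))) N = - poly Q N / poly P N"
proof -
  have "P \<noteq> 0" using N by auto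
  have "(\<lambda>u. poly Q u / (poly P u * (N - u))) = (\<lambda>u. (- poly Q u / poly P u) / (u - N))"
    by (simp add: fun_eq_iff divide_divide_eq_left mult.commute)
      (metis minus_diff_eq mult_minus_left divide_minus_right)
  moreover have "residue (\<lambda>u. (- poly Q u / poly P u) / (u - N)) N = - poly Q N / poly P N"
    using N \<open>P \<noteq> 0\<close>
    by (intro residue_simple[of "UNIV - {z. poly P z = 0}"])
      (auto simp: poly_roots_finite finite_imp_closed open_Diff intro!: holomorphic_intros)
  ultimately show ?thesis
    by simp
qed

(* The integrand is O(|u|^-2), so its residues sum to zero and those inside the circle
   cancel the one at N. *)
lemma contour_integral_circlepath_rational_pole_outside:
  fixes P Q :: "complex poly"
  assumes deg: "degree Q < degree P" and R: "R > 0"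
    and roots: "\<And>z. poly P z = 0 \<Longrightarrow> dist c z < R" and N: "dist c N > R"
  shows "contour_integral (circlepath c R) (\<lambda>u. poly Q u / (poly P u * (N - u)))
    = 2 * pi * \<i> * (poly Q N / poly P N)"
proof -
  define h where "h = (\<lambda>u. poly Q u / (poly P u * (N - u)))"
  define Z where "Z = {z. poly P z = 0}"
  have "P \<noteq> 0" using deg by auto
  then have Z: "finite Z" by (simp add: Z_def poly_roots_finite)
  have "N \<notin> Z" using roots N by (force simp: Z_def)
  have holo: "h holomorphic_on UNIV - insert N Z"
    by (auto simp: h_def Z_def intro!: holomorphic_intros)
  have "contour_integral (circlepath c R) h = 2 * pi * \<i> * (\<Sum>p\<in>insert N Z \<inter> ball c R. residue h p)"
    using Z roots N by (intro contour_integral_circlepath_eq_residues[OF _ holo R]) (auto simp: Z_def)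
  also have "insert N Z \<inter> ball c R = Z"
    using roots N by (auto simp: Z_def)
  also have "(\<Sum>p\<in>Z. residue h p) = - residue h N"
  proof -
    have "degree (P * [:N, -1:]) = Suc (degree P)"
      using \<open>P \<noteq> 0\<close> by (subst degree_mult_eq) auto
    then have "((\<lambda>z. poly (pCons 0 Q) z / poly (P * [:N, -1:]) z) \<longlongrightarrow> 0) at_infinity"
      using deg degree_pCons_le[of 0 Q] by (intro poly_divide_tendsto_0_at_infinity) linarith
    then have "((\<lambda>z. z * h z) \<longlongrightarrow> 0) at_infinity"
      by (simp add: h_def algebra_simps)
    from sum_residues_eq_0[OF _ holo this] Z \<open>N \<notin> Z\<close> show ?thesis
      by (simp add: add_eq_0_iff)
  qed
  also have "residue h N = - poly Q N / poly P N"
    unfolding h_def using \<open>N \<notin> Z\<close> by (intro residue_divide_linear_factor) (simp add: Z_def)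
  finally show ?thesis by (simp add: h_def)
qed

lemma divdiff_eq_contour_integral:
  assumes g: "g holomorphic_on UNIV" and inj: "inj_on x {..<m}"
    and x: "\<forall>k<m. x k \<in> ball c R" and R: "R > 0"
  shows "divdiff g m x = contour_integral (circlepath c R) (\<lambda>u. g u / (\<Prod>k<m. u - x k)) / (2 * pi * \<i>)"
proof -
  define f where "f = (\<lambda>u. g u / (\<Prod>k<m. u - x k))"
  have residue_node: "residue f (x j) = g (x j) / (\<Prod>k\<in>{..<m} - {j}. x j - x k)" if j: "j < m" for j
  proof -
    have f_eq: "f = (\<lambda>u. g u / (\<Prod>k\<in>{..<m} - {j}. u - x k) / (u - x j))"
      using j by (auto simp: f_def fun_eq_iff prod.remove[of "{..<m}" j] divide_divide_eq_left mult.commute)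
    have "residue (\<lambda>u. g u / (\<Prod>k\<in>{..<m} - {j}. u - x k) / (u - x j)) (x j)
        = g (x j) / (\<Prod>k\<in>{..<m} - {j}. x j - x k)"
      using inj j
      by (intro residue_simple[of "UNIV - x ` ({..<m} - {j})"])
        (auto simp: finite_imp_closed open_Diff inj_on_def intro!: holomorphic_intros holomorphic_on_subset[OF g])
    then show ?thesis by (simp only: f_eq)
  qed
  have "contour_integral (circlepath c R) f = 2 * pi * \<i> * (\<Sum>p\<in>x ` {..<m} \<inter> ball c R. residue f p)"
    using x by (intro contour_integral_circlepath_eq_residues[OF _ _ R])
      (auto simp: f_def intro!: holomorphic_intros holomorphic_on_subset[OF g])
  also have "x ` {..<m} \<inter> ball c R = x ` {..<m}"
    using x by auto
  also have "(\<Sum>p\<in>x ` {..<m}. residue f p) = divdiff g m x"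
    by (simp add: divdiff_def sum.reindex[OF inj] residue_node)
  finally show ?thesis by (simp add: f_def)
qed

definition nodal_integral ::
    "(complex \<Rightarrow> complex) \<Rightarrow> complex \<Rightarrow> real \<Rightarrow> nat \<Rightarrow> (nat \<Rightarrow> nat) \<Rightarrow> (nat \<Rightarrow> complex) \<Rightarrow> complex"
  where "nodal_integral g c R m e x =
    contour_integral (circlepath c R) (\<lambda>u. g u / (\<Prod>k<m. (u - x k) ^ e k))"

lemma has_field_derivative_nodal_integral:
  assumes g: "g holomorphic_on UNIV" and x: "\<forall>k<m. x k \<in> ball c R" and j: "j < m" and ej: "e j \<noteq> 0"
  shows "((\<lambda>z. nodal_integral g c R m e (x(j := z))) has_field_derivative
      of_nat (e j) * nodal_integral g c R m (e(j := Suc (e j))) x) (at (x j))"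
proof -
  define f where "f u = g u / (\<Prod>k\<in>{..<m} - {j}. (u - x k) ^ e k)" for u
  have split_node: "g u / (\<Prod>k<m. (u - (x(j := z)) k) ^ e' k) = f u / (u - z) ^ e' j"
    if "e' = e \<or> e' = e(j := Suc (e j))" for u z e'
    using that j by (auto simp: f_def prod.remove[of "{..<m}" j] divide_divide_eq_left mult.commute
        intro!: arg_cong2[where f = "(/)"] prod.cong)
  have f_cont: "continuous_on (path_image (circlepath c R)) f"
    unfolding f_def using x
    by (intro continuous_intros holomorphic_on_imp_continuous_on[OF holomorphic_on_subset[OF g]]) auto
  have "((\<lambda>u. f u / (u - w) ^ e j) has_contour_integral nodal_integral g c R m e (x(j := w))) (circlepath c R)"
    if w: "w \<in> ball c R" for w
  proof -
    have "(\<lambda>u. f u / (u - w) ^ e j) contour_integrable_on (circlepath c R)"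
      using w by (intro contour_integrable_continuous_circlepath continuous_intros f_cont) auto
    then show ?thesis
      unfolding nodal_integral_def using split_node[of e] by (simp add: has_contour_integral_integral)
  qed
  from Cauchy_next_derivative_circlepath(2)[OF f_cont this ej] j x
  show ?thesis
    unfolding nodal_integral_def using split_node[of "e(j := Suc (e j))" _ "x j"] by (simp add: fun_upd_idem)
qed

definition nodes_in_ball :: "complex \<Rightarrow> real \<Rightarrow> nat \<Rightarrow> (nat \<Rightarrow> complex) set"
  where "nodes_in_ball c R m = {x. inj_on x {..<m} \<and> (\<forall>k<m. x k \<in> ball c R)}"

lemma eventually_fun_upd_in_nodes_in_ball:
  assumes x: "x \<in> nodes_in_ball c R m" and j: "j < m"
  shows "eventually (\<lambda>z. x(j := z) \<in> nodes_in_ball c R m) (nhds (x j))"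
proof -
  define V where "V = ball c R - x ` ({..<m} - {j})"
  have "open V" unfolding V_def by (intro open_Diff finite_imp_closed) auto
  moreover have "x j \<in> V" using x j unfolding V_def nodes_in_ball_def by (auto simp: inj_on_def)
  moreover have "x(j := z) \<in> nodes_in_ball c R m" if "z \<in> V" for z
    using that x j unfolding V_def nodes_in_ball_def by (auto simp: inj_on_def)
  ultimately show ?thesis unfolding eventually_nhds by blast
qed

lemma cpartial_cong_nodes_in_ball:
  assumes "\<forall>y\<in>nodes_in_ball c R m. H y = K y" and "x \<in> nodes_in_ball c R m" and "j < m"
  shows "cpartial j H x = cpartial j K x"
  unfolding cpartial_def using assms
  by (intro deriv_cong_ev eventually_mono[OF eventually_fun_upd_in_nodes_in_ball]) auto

lemma cpartial_funpow_nodal_integral: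
  assumes g: "g holomorphic_on UNIV" and H: "\<forall>y\<in>nodes_in_ball c R m. H y = C * nodal_integral g c R m e y"
    and j: "j < m" and ej: "e j = 1"
  shows "\<forall>y\<in>nodes_in_ball c R m.
    (cpartial j ^^ s) H y = C * fact s * nodal_integral g c R m (e(j := Suc s)) y"
proof (induction s)
  case 0
  then show ?case using H ej by (simp add: fun_upd_idem)
next
  case (Suc s)
  show ?case
  proof
    fix y assume y: "y \<in> nodes_in_ball c R m"
    have "(cpartial j ^^ Suc s) H y = cpartial j (\<lambda>y. C * fact s * nodal_integral g c R m (e(j := Suc s)) y) y"
      using cpartial_cong_nodes_in_ball[OF Suc.IH y j] by (simp only: funpow.simps comp_apply)
    also have "\<dots> = C * fact s * (of_nat (Suc s) * nodal_integral g c R m (e(j := Suc (Suc s))) y)"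
      using y unfolding cpartial_def nodes_in_ball_def
      using has_field_derivative_nodal_integral[OF g _ j, where x = y and e = "e(j := Suc s)"]
      by (intro DERIV_imp_deriv DERIV_cmult) auto
    finally show "(cpartial j ^^ Suc s) H y = C * fact (Suc s) * nodal_integral g c R m (e(j := Suc (Suc s))) y"
      by (simp add: algebra_simps)
  qed
qed

lemma fold_cpartial_divdiff:
  assumes g: "g holomorphic_on UNIV" and R: "R > 0" and n: "n \<le> m"
  shows "\<forall>x\<in>nodes_in_ball c R m. fold (\<lambda>j H. (cpartial j ^^ r j) H) [0..<n] (divdiff g m) x
    = (\<Prod>i<n. fact (r i)) / (2 * pi * \<i>) * nodal_integral g c R m (\<lambda>i. if i < n then Suc (r i) else 1) x"
  using n
proof (induction n)
  case 0
  then show ?case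
    using divdiff_eq_contour_integral[OF g _ _ R] by (auto simp: nodes_in_ball_def nodal_integral_def)
next
  case (Suc n)
  let ?e = "\<lambda>i. if i < n then Suc (r i) else 1"
  have "\<forall>y\<in>nodes_in_ball c R m. (cpartial n ^^ r n) (fold (\<lambda>j H. (cpartial j ^^ r j) H) [0..<n] (divdiff g m)) y
     = (\<Prod>i<n. fact (r i)) / (2 * pi * \<i>) * fact (r n) * nodal_integral g c R m (?e(n := Suc (r n))) y"
    by (rule cpartial_funpow_nodal_integral[OF g]) (use Suc in auto)
  moreover have "?e(n := Suc (r n)) = (\<lambda>i. if i < Suc n then Suc (r i) else 1)"
    by auto
  ultimately show ?case by (simp add: algebra_simps)
qed

lemma conf_divdiff_eq_contour_integral:
  assumes g: "g holomorphic_on UNIV" and inj: "inj_on x {..<m}"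
    and x: "\<forall>k<m. x k \<in> ball c R" and R: "R > 0"
  shows "conf_divdiff g m x r
    = contour_integral (circlepath c R) (\<lambda>u. g u / (\<Prod>k<m. (u - x k) ^ Suc (r k))) / (2 * pi * \<i>)"
proof -
  have "mixed_partial r m (divdiff g m) x
      = (\<Prod>i<m. fact (r i)) / (2 * pi * \<i>) * nodal_integral g c R m (\<lambda>i. if i < m then Suc (r i) else 1) x"
    using fold_cpartial_divdiff[OF g R order.refl, where c = c and r = r] inj x
    unfolding mixed_partial_def nodes_in_ball_def by auto
  also have "nodal_integral g c R m (\<lambda>i. if i < m then Suc (r i) else 1) x
      = contour_integral (circlepath c R) (\<lambda>u. g u / (\<Prod>k<m. (u - x k) ^ Suc (r k)))"
    unfolding nodal_integral_def by (auto intro!: arg_cong[where f = "contour_integral _"] prod.cong)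
  finally show ?thesis
    unfolding conf_divdiff_def by (simp add: field_simps)
qed

lemma circlepath_in_sphere: "R \<ge> 0 \<Longrightarrow> circlepath c R s \<in> sphere c R"
  by (simp add: circlepath dist_norm norm_mult norm_exp_eq_Re)

lemma cnj_circlepath: "cnj \<circ> circlepath (complex_of_real c) R = reversepath (circlepath (complex_of_real c) R)"
proof
  fix s :: real
  have "exp (2 * of_real pi * \<i> * of_real (1 - s)) = exp (2 * of_real pi * \<i>) * exp (- (2 * of_real pi * \<i> * of_real s))"
    unfolding exp_add[symmetric] by (rule arg_cong[where f = exp]) (simp add: algebra_simps)
  then show "(cnj \<circ> circlepath (complex_of_real c) R) s = reversepath (circlepath (complex_of_real c) R) s"
    by (simp add: reversepath_def circlepath exp_cnj)
qed

lemma contour_integral_circlepath_eq_integral: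
  "contour_integral (circlepath c R) G
    = integral (cbox 0 1) (\<lambda>s. G (circlepath c R s) * (2 * pi * \<i> * R * exp (2 * of_real pi * \<i> * s)))"
  unfolding contour_integral_integral vector_derivative_circlepath by simp

lemma continuous_on_circlepath_integrand:
  fixes G :: "'a::topological_space \<Rightarrow> complex \<Rightarrow> complex"
  assumes G: "continuous_on (U \<times> sphere c R) (\<lambda>z. G (fst z) (snd z))" and R: "R \<ge> 0"
  shows "continuous_on (U \<times> cbox 0 1)
    (\<lambda>(t, s). G t (circlepath c R s) * (2 * pi * \<i> * R * exp (2 * of_real pi * \<i> * s)))"
proof -
  have "continuous_on (U \<times> cbox 0 1) (\<lambda>z. (fst z, circlepath c R (snd z)))"
    unfolding circlepath by (intro continuous_intros)
  moreover have "(\<lambda>z. (fst z, circlepath c R (snd z))) ` (U \<times> cbox 0 1) \<subseteq> U \<times> sphere c R"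
    using circlepath_in_sphere[OF R] by auto
  ultimately have "continuous_on (U \<times> cbox 0 1) (\<lambda>z. G (fst z) (circlepath c R (snd z)))"
    using continuous_on_compose2[OF G] by fastforce
  then show ?thesis
    unfolding case_prod_beta by (intro continuous_intros)
qed

lemma continuous_on_contour_integral_circlepath_param:
  fixes G :: "'a::topological_space \<Rightarrow> complex \<Rightarrow> complex"
  assumes "continuous_on (U \<times> sphere c R) (\<lambda>z. G (fst z) (snd z))" and "R \<ge> 0"
  shows "continuous_on U (\<lambda>t. contour_integral (circlepath c R) (G t))"
  unfolding contour_integral_circlepath_eq_integral
  by (rule integral_continuous_on_param[OF continuous_on_circlepath_integrand[OF assms]])

lemma has_vector_derivative_contour_integral_circlepath_param:
  fixes G G' :: "real \<Rightarrow> complex \<Rightarrow> complex"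
  assumes G: "continuous_on (U \<times> sphere c R) (\<lambda>z. G (fst z) (snd z))"
    and G': "continuous_on (U \<times> sphere c R) (\<lambda>z. G' (fst z) (snd z))"
    and der: "\<And>t u. t \<in> U \<Longrightarrow> u \<in> sphere c R \<Longrightarrow> ((\<lambda>t. G t u) has_vector_derivative G' t u) (at t within U)"
    and t: "t \<in> U" and U: "convex U" and R: "R \<ge> 0"
  shows "((\<lambda>t. contour_integral (circlepath c R) (G t))
    has_vector_derivative contour_integral (circlepath c R) (G' t)) (at t within U)"
  unfolding contour_integral_circlepath_eq_integral
proof (rule leibniz_rule_vector_derivative[OF _ _ continuous_on_circlepath_integrand[OF G' R] t U])
  fix t assume "t \<in> U"
  then have "continuous_on (cbox 0 1) (\<lambda>s. G t (circlepath c R s) * (2 * pi * \<i> * R * exp (2 * of_real pi * \<i> * s)))"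
    by (intro continuous_on_compose2[OF continuous_on_circlepath_integrand[OF G R], where f = "Pair t", unfolded case_prod_beta fst_conv snd_conv])
      (auto intro!: continuous_intros)
  then show "(\<lambda>s. G t (circlepath c R s) * (2 * pi * \<i> * R * exp (2 * of_real pi * \<i> * s))) integrable_on cbox 0 1"
    by (rule integrable_continuous)
qed (auto intro!: has_vector_derivative_mult_left der circlepath_in_sphere R)

lemma set_integrable_powr_0_1:
  fixes a C :: real
  assumes "a > -1"
  shows "set_integrable lborel {0<..1} (\<lambda>t. C * t powr a)"
proof -
  have "(\<lambda>t. t powr a) integrable_on {0<..1}"
    by (rule integrable_on_powr_from_0') (use assms in auto)
  then have "(\<lambda>t. t powr a) absolutely_integrable_on {0<..1}"
    by (subst absolutely_integrable_on_iff_nonneg) auto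
  from integrable_mult_right[OF this[unfolded set_integrable_def], of C]
  show ?thesis
    unfolding set_integrable_def
    by (subst (asm) integrable_completion)
      (auto simp: mult_ac intro!: borel_measurable_continuous_on_indicator continuous_intros)
qed

lemma set_integral_Ioc_0_1_FTC:
  fixes f F :: "real \<Rightarrow> 'a::euclidean_space"
  assumes der: "\<And>t. t \<in> {0<..<1} \<Longrightarrow> (F has_vector_derivative f t) (at t)"
    and cont: "continuous_on {0<..1} f" and int: "set_integrable lborel {0<..1} f"
    and lim0: "(F \<longlongrightarrow> A) (at_right 0)" and cont1: "isCont F 1"
  shows "(LINT t:{0<..1}|lborel. f t) = F 1 - A"
proof -
  have "(LBINT t=ereal 0..ereal 1. f t) = F 1 - A"
  proof (rule interval_integral_FTC_integrable)
    fix t assume t: "ereal 0 < ereal t" "ereal t < ereal 1"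
    then show "(F has_vector_derivative f t) (at t)"
      by (intro der) simp
    have "continuous_on {0<..<1} f"
      by (rule continuous_on_subset[OF cont]) auto
    with t show "isCont f t"
      by (simp add: continuous_on_eq_continuous_at)
  next
    show "set_integrable lborel (einterval (ereal 0) (ereal 1)) f"
      unfolding einterval_eq_Icc by (rule set_integrable_subset[OF int]) auto
    show "((F \<circ> real_of_ereal) \<longlongrightarrow> A) (at_right (ereal 0))"
      unfolding at_right_ereal tendsto_compose_filtermap[symmetric] using lim0 by (simp add: o_def)
    have "(F \<longlongrightarrow> F 1) (at_left 1)"
      using cont1 unfolding isCont_def by (rule tendsto_mono[OF at_le, rotated]) simp
    then show "((F \<circ> real_of_ereal) \<longlongrightarrow> F 1) (at_left (ereal 1))"
      unfolding at_left_ereal tendsto_compose_filtermap[symmetric] by (simp add: o_def)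
  qed simp
  moreover have "(LBINT t=ereal 0..ereal 1. f t) = (LINT t:{0<..<1}|lborel. f t)"
    by (simp add: interval_lebesgue_integral_le_eq)
  moreover have "\<dots> = (LINT t:{0<..1}|lborel. f t)"
    by (rule set_integral_discrete_difference[where X = "{1}"]) auto
  ultimately show ?thesis by simp
qed

lemma Re_le_of_mem_sphere: "u \<in> sphere (complex_of_real c) R \<Longrightarrow> Re u \<le> c + R"
  using complex_Re_le_cmod[of "u - of_real c"] by (simp add: dist_norm norm_minus_commute)

lemma norm_exp_ln_le_powr:
  assumes t: "t \<in> {0<..1}" and u: "Re u \<le> \<sigma>"
  shows "norm (exp ((of_real a - u) * of_real (ln t))) \<le> t powr (a - \<sigma>)"
proof -
  have "norm (exp ((of_real a - u) * of_real (ln t))) = exp ((a - Re u) * ln t)"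
    by (simp add: norm_exp_eq_Re)
  also have "\<dots> \<le> exp ((a - \<sigma>) * ln t)"
    using t u by (intro exp_mono mult_right_mono_neg) auto
  also have "\<dots> = t powr (a - \<sigma>)"
    using t by (simp add: powr_def)
  finally show ?thesis .
qed

(* 1/(2 pi i) times the integral of f(u) t^(a-u) du over the circle |u - c| = R;
   the weight of the theorem is the case f = q/p, a = -1. *)
definition circle_mellin :: "real \<Rightarrow> real \<Rightarrow> (complex \<Rightarrow> complex) \<Rightarrow> real \<Rightarrow> real \<Rightarrow> complex" where
  "circle_mellin c R f a t = contour_integral (circlepath (complex_of_real c) R)
     (\<lambda>u. f u * exp ((of_real a - u) * of_real (ln t))) / (2 * pi * \<i>)"

lemma continuous_on_circle_mellin_integrand:
  fixes a c R :: real and f :: "complex \<Rightarrow> complex"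
  assumes f: "continuous_on (sphere (complex_of_real c) R) f"
  shows "continuous_on ({0::real<..} \<times> sphere (complex_of_real c) R)
    (\<lambda>z. f (snd z) * exp ((of_real a - snd z) * of_real (ln (fst z))))"
proof -
  have "continuous_on ({0::real<..} \<times> sphere (complex_of_real c) R) (\<lambda>z. f (snd z))"
    by (rule continuous_on_compose2[OF f continuous_on_snd]) auto
  moreover have "continuous_on ({0::real<..} \<times> sphere (complex_of_real c) R)
      (\<lambda>z. exp ((of_real a - snd z) * of_real (ln (fst z))))"
    by (intro continuous_intros) auto
  ultimately show ?thesis
    by (rule continuous_on_mult)
qed

lemma continuous_on_circle_mellin:
  assumes "continuous_on (sphere (complex_of_real c) R) f" and "R \<ge> 0"
  shows "continuous_on {0<..} (circle_mellin c R f a)"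
  unfolding circle_mellin_def
  by (intro continuous_intros continuous_on_contour_integral_circlepath_param
      continuous_on_circle_mellin_integrand assms) auto

lemma has_vector_derivative_exp_mult_ln:
  fixes a s :: real and u :: complex
  assumes s: "s > 0"
  shows "((\<lambda>s. exp ((of_real a - u) * of_real (ln s))) has_vector_derivative
    (of_real a - u) * exp ((of_real (a - 1) - u) * of_real (ln s))) (at s)"
proof -
  have "((\<lambda>s. (of_real a - u) * of_real (ln s)) has_vector_derivative (of_real a - u) * of_real (inverse s)) (at s)"
    using s by (intro has_vector_derivative_mult_right has_vector_derivative_of_real DERIV_ln) auto
  from field_vector_diff_chain_at[OF this DERIV_exp]
  have "((\<lambda>s. exp ((of_real a - u) * of_real (ln s))) has_vector_derivative
      (of_real a - u) * of_real (inverse s) * exp ((of_real a - u) * of_real (ln s))) (at s)"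
    by (simp only: comp_def)
  moreover have "exp ((of_real (a - 1) - u) * of_real (ln s)) = exp ((of_real a - u) * of_real (ln s) - of_real (ln s))"
    by (rule arg_cong[where f = exp]) (simp add: algebra_simps)
  then have "exp ((of_real (a - 1) - u) * of_real (ln s)) = exp ((of_real a - u) * of_real (ln s)) * of_real (inverse s)"
    using s by (subst (asm) exp_diff) (simp add: exp_of_real divide_inverse)
  ultimately show ?thesis
    by (simp only: mult_ac)
qed

lemma has_vector_derivative_circle_mellin:
  assumes g: "continuous_on (sphere (complex_of_real c) R) g" and R: "R \<ge> 0" and t: "t > 0"
  shows "(circle_mellin c R g a has_vector_derivative
    circle_mellin c R (\<lambda>u. (of_real a - u) * g u) (a - 1) t) (at t)"
proof -
  have "((\<lambda>s. g u * exp ((of_real a - u) * of_real (ln s))) has_vector_derivative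
      (of_real a - u) * g u * exp ((of_real (a - 1) - u) * of_real (ln s))) (at s within {0<..})"
    if "s \<in> {0<..}" for s u
  proof -
    have "s > 0"
      using that by simp
    from has_vector_derivative_mult_right[OF has_vector_derivative_exp_mult_ln[OF this, where a = a and u = u],
        where a = "g u"]
    have "((\<lambda>s. g u * exp ((of_real a - u) * of_real (ln s))) has_vector_derivative
      (of_real a - u) * g u * exp ((of_real (a - 1) - u) * of_real (ln s))) (at s)"
      by (simp only: mult.left_commute mult.assoc)
    then show ?thesis
      by (rule has_vector_derivative_at_within)
  qed
  then have "((\<lambda>s. contour_integral (circlepath (complex_of_real c) R) (\<lambda>u. g u * exp ((of_real a - u) * of_real (ln s))))
      has_vector_derivative contour_integral (circlepath (complex_of_real c) R)
        (\<lambda>u. (of_real a - u) * g u * exp ((of_real (a - 1) - u) * of_real (ln t)))) (at t within {0<..})"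
    using t R continuous_on_mult[OF continuous_on_diff[OF continuous_on_const continuous_on_id] g]
    by (intro has_vector_derivative_contour_integral_circlepath_param continuous_on_circle_mellin_integrand
        g) auto
  with t show ?thesis
    unfolding circle_mellin_def
    by (intro has_vector_derivative_divide has_vector_derivative_within_open[THEN iffD1, OF _ open_greaterThan]) auto
qed

lemma norm_circle_mellin_le:
  assumes f: "continuous_on (sphere (complex_of_real c) R) f" and R: "R > 0"
  obtains B where "\<And>t. t \<in> {0<..1} \<Longrightarrow> norm (circle_mellin c R f a t) \<le> B * t powr (a - (c + R))"
proof -
  obtain B where "B > 0" and "\<forall>y\<in>f ` sphere (complex_of_real c) R. norm y \<le> B"
    using compact_imp_bounded[OF compact_continuous_image[OF f compact_sphere]] bounded_pos by metis
  then have B: "B \<ge> 0" "\<And>u. u \<in> sphere (complex_of_real c) R \<Longrightarrow> norm (f u) \<le> B"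
    by auto
  have "norm (circle_mellin c R f a t) \<le> B * R * t powr (a - (c + R))" if t: "t \<in> {0<..1}" for t
  proof -
    have "continuous_on (sphere (complex_of_real c) R) (\<lambda>u. f u * exp ((of_real a - u) * of_real (ln t)))"
      by (intro continuous_intros f)
    then have "(\<lambda>u. f u * exp ((of_real a - u) * of_real (ln t))) contour_integrable_on circlepath (complex_of_real c) R"
      using R by (intro contour_integrable_continuous_circlepath) simp
    moreover have "norm (f u * exp ((of_real a - u) * of_real (ln t))) \<le> B * t powr (a - (c + R))"
      if "norm (u - of_real c) = R" for u
      using that B norm_exp_ln_le_powr[OF t Re_le_of_mem_sphere[of u c R]]
      by (auto simp: dist_norm norm_mult norm_minus_commute intro!: mult_mono)
    ultimately have "norm (contour_integral (circlepath (complex_of_real c) R) (\<lambda>u. f u * exp ((of_real a - u) * of_real (ln t))))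
        \<le> B * t powr (a - (c + R)) * (2 * pi * R)"
      using R B(1) by (intro has_contour_integral_bound_circlepath[OF has_contour_integral_integral]) auto
    then show ?thesis
      by (simp add: circle_mellin_def norm_divide norm_mult field_simps)
  qed
  then show ?thesis by (rule that)
qed

lemma set_integrable_circle_mellin:
  assumes f: "continuous_on (sphere (complex_of_real c) R) f" and R: "R > 0" and a: "a > c + R - 1"
  shows "set_integrable lborel {0<..1} (circle_mellin c R f a)"
proof -
  obtain B where B: "\<And>t. t \<in> {0<..1} \<Longrightarrow> norm (circle_mellin c R f a t) \<le> B * t powr (a - (c + R))"
    using norm_circle_mellin_le[OF f R] by blast
  show ?thesis
  proof (rule set_integrable_bound[OF set_integrable_powr_0_1[of "a - (c + R)" B]])
    have "continuous_on {0<..1} (circle_mellin c R f a)"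
      by (rule continuous_on_subset[OF continuous_on_circle_mellin[OF f]]) (use R in auto)
    then show "set_borel_measurable lborel {0<..1} (circle_mellin c R f a)"
      unfolding set_borel_measurable_def by (simp add: borel_measurable_continuous_on_indicator)
    show "AE t in lborel. t \<in> {0<..1} \<longrightarrow> norm (circle_mellin c R f a t) \<le> norm (B * t powr (a - (c + R)))"
      using B by (intro AE_I2 impI) (metis abs_ge_self order.trans real_norm_def)
    show "a - (c + R) > -1"
      using a by simp
  qed
qed

lemma circle_mellin_tendsto_0:
  assumes f: "continuous_on (sphere (complex_of_real c) R) f" and R: "R > 0" and a: "a > c + R"
  shows "(circle_mellin c R f a \<longlongrightarrow> 0) (at_right 0)"
proof -
  obtain B where B: "\<And>t. t \<in> {0<..1} \<Longrightarrow> norm (circle_mellin c R f a t) \<le> B * t powr (a - (c + R))"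
    using norm_circle_mellin_le[OF f R] by blast
  have "((\<lambda>t::real. t powr (a - (c + R))) \<longlongrightarrow> 0) (at_right 0)"
    using a by (intro tendsto_zero_powrI tendsto_ident_at eventually_mono[OF eventually_at_right_less]) auto
  then have "((\<lambda>t. B * t powr (a - (c + R))) \<longlongrightarrow> 0) (at_right 0)"
    by (rule tendsto_mult_right_zero)
  moreover have "\<forall>\<^sub>F t in at_right 0. norm (circle_mellin c R f a t) \<le> B * t powr (a - (c + R))"
    unfolding eventually_at_right_field using B by (intro exI[of _ 1]) auto
  ultimately show ?thesis
    by (rule Lim_null_comparison[rotated])
qed

lemma circle_mellin_mult_power:
  assumes f: "continuous_on (sphere (complex_of_real c) R) f" and R: "R \<ge> 0" and t: "t > 0"
  shows "of_real (t ^ n) * circle_mellin c R f a t = circle_mellin c R f (a + n) t"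
proof -
  have "exp ((of_real (a + n) - u) * of_real (ln t)) = of_real (t ^ n) * exp ((of_real a - u) * of_real (ln t))"
    for u :: complex
  proof -
    have "exp ((of_real (a + n) - u) * of_real (ln t)) = exp (of_real (n * ln t) + (of_real a - u) * of_real (ln t))"
      by (rule arg_cong[where f = exp]) (simp add: algebra_simps)
    also have "\<dots> = of_real (t ^ n) * exp ((of_real a - u) * of_real (ln t))"
      using t by (simp add: exp_add exp_of_real exp_of_nat_mult)
    finally show ?thesis .
  qed
  moreover have "continuous_on (sphere (complex_of_real c) R) (\<lambda>u. f u * exp ((of_real a - u) * of_real (ln t)))"
    by (intro continuous_intros f)
  then have "(\<lambda>u. f u * exp ((of_real a - u) * of_real (ln t))) contour_integrable_on circlepath (of_real c) R"
    using R by (intro contour_integrable_continuous_circlepath) simp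
  ultimately show ?thesis
    unfolding circle_mellin_def by (simp add: contour_integral_lmul[symmetric] mult_ac)
qed

lemma circle_mellin_real:
  assumes f: "\<And>u. cnj (f (cnj u)) = f u"
  shows "circle_mellin c R f a t \<in> \<real>"
proof -
  define G where "G = (\<lambda>u. f u * exp ((of_real a - u) * of_real (ln t)))"
  have "cnj \<circ> G \<circ> cnj = G"
    using f by (auto simp: G_def fun_eq_iff exp_cnj)
  then have "cnj (contour_integral (circlepath (of_real c) R) G)
      = contour_integral (reversepath (circlepath (of_real c) R)) G"
    using contour_integral_cnj[OF valid_path_circlepath, of "of_real c" R G]
    by (simp only: cnj_circlepath)
  also have "\<dots> = - contour_integral (circlepath (of_real c) R) G"
    by (simp add: contour_integral_reversepath)
  finally have "cnj (circle_mellin c R f a t) = circle_mellin c R f a t"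
    by (simp add: circle_mellin_def G_def)
  then show ?thesis
    using Reals_cnj_iff by blast
qed

lemma set_integral_circle_mellin:
  assumes f: "continuous_on (sphere (complex_of_real c) R) f" and R: "R > 0" and a: "a > c + R"
  shows "(LINT t:{0<..1}|lborel. circle_mellin c R f (a - 1) t)
    = contour_integral (circlepath (complex_of_real c) R) (\<lambda>u. f u / (of_real a - u)) / (2 * pi * \<i>)"
proof -
  define g where "g = (\<lambda>u. f u / (of_real a - u))"
  have a_u: "of_real a - u \<noteq> 0" if "u \<in> sphere (complex_of_real c) R" for u
    using Re_le_of_mem_sphere[OF that] a by auto
  have g_cont: "continuous_on (sphere (complex_of_real c) R) g"
    unfolding g_def using a_u by (intro continuous_intros f) auto
  have "circle_mellin c R (\<lambda>u. (of_real a - u) * g u) (a - 1) = circle_mellin c R f (a - 1)"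
    unfolding circle_mellin_def g_def using R a_u
    by (intro ext arg_cong2[where f = "(/)"] contour_integral_eq refl) auto
  then have "(circle_mellin c R g a has_vector_derivative circle_mellin c R f (a - 1) t) (at t)" if "t > 0" for t
    using has_vector_derivative_circle_mellin[OF g_cont _ that, of a] R by simp
  moreover have "isCont (circle_mellin c R g a) 1"
    using continuous_on_circle_mellin[OF g_cont, of a] R
    by (simp add: continuous_on_eq_continuous_at[OF open_greaterThan])
  ultimately have "(LINT t:{0<..1}|lborel. circle_mellin c R f (a - 1) t) = circle_mellin c R g a 1 - 0"
    using R a
    by (intro set_integral_Ioc_0_1_FTC circle_mellin_tendsto_0 g_cont set_integrable_circle_mellin f
        continuous_on_subset[OF continuous_on_circle_mellin[OF f]]) auto
  then show ?thesis
    by (simp add: circle_mellin_def g_def)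
qed

lemma mem_ball_left_of_Re_le:
  fixes z :: complex
  assumes \<delta>: "\<delta> > 0" and z: "Re z \<le> - \<delta>" and K: "norm z ^ 2 < K * \<delta>"
  shows "z \<in> ball (complex_of_real (- K)) (K - \<delta> / 2)"
proof -
  have "\<delta> \<le> norm z"
    using z abs_Re_le_cmod[of z] by linarith
  then have "\<delta> * \<delta> < K * \<delta>"
    using K \<delta> by (smt (verit) mult_mono power2_eq_square)
  then have "\<delta> < K"
    using \<delta> by simp
  have "norm (z + of_real K) ^ 2 = norm z ^ 2 + 2 * K * Re z + K ^ 2"
    by (simp add: cmod_power2 power2_sum algebra_simps)
  also have "\<dots> < (K - \<delta> / 2) ^ 2"
  proof -
    have "2 * K * Re z \<le> - 2 * K * \<delta>"
      using mult_left_mono[OF z, of "2 * K"] \<open>\<delta> < K\<close> \<delta> by simp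
    moreover have "\<delta> * \<delta> > 0"
      using \<delta> by simp
    ultimately show ?thesis
      using K by (simp add: power2_eq_square algebra_simps)
  qed
  finally have "norm (z + of_real K) < K - \<delta> / 2"
    by (rule power2_less_imp_less) (use \<open>\<delta> < K\<close> \<delta> in simp)
  then show ?thesis
    by (simp add: dist_norm norm_minus_commute add.commute)
qed

lemma exists_disc_in_left_half_plane:
  assumes A: "finite A" and left: "\<forall>z\<in>A. Re z < 0"
  shows "\<exists>c R. R > 0 \<and> c + R < 0 \<and> A \<subseteq> ball (complex_of_real c) R"
proof (cases "A = {}")
  case True
  then show ?thesis by (intro exI[of _ "-2"] exI[of _ 1]) auto
next
  case False
  define \<delta> where "\<delta> = Min ((\<lambda>z. - Re z) ` A)"
  define K where "K = (\<Sum>z\<in>A. norm z ^ 2) / \<delta> + \<delta>"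
  have \<delta>: "\<delta> > 0"
    using A False left by (simp add: \<delta>_def)
  have Re_le: "Re z \<le> - \<delta>" if "z \<in> A" for z
    using A that unfolding \<delta>_def by (smt (verit) Min_le finite_imageI imageI)
  have K: "norm z ^ 2 < K * \<delta>" if "z \<in> A" for z
  proof -
    have "norm z ^ 2 \<le> (\<Sum>z\<in>A. norm z ^ 2)"
      using A that by (intro member_le_sum) auto
    also have "\<dots> < K * \<delta>"
      using \<delta> by (simp add: K_def field_simps)
    finally show ?thesis .
  qed
  have "A \<subseteq> ball (complex_of_real (- K)) (K - \<delta> / 2)"
    using mem_ball_left_of_Re_le[OF \<delta> Re_le K] by blast
  moreover have "K \<ge> \<delta>"
    using \<delta> by (simp add: K_def sum_nonneg)
  ultimately show ?thesis
    using \<delta> by (intro exI[of _ "- K"] exI[of _ "K - \<delta> / 2"]) auto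
qed

lemma conf_divdiff_eq_circle_mellin:
  assumes g: "g holomorphic_on UNIV" and inj: "inj_on \<alpha> {..<m}"
    and nodes: "\<alpha> ` {..<m} \<subseteq> ball (complex_of_real c) R" and R: "R > 0" and b: "\<forall>j<m. b j \<ge> 1"
  shows "conf_divdiff (\<lambda>z. g z * exp ((- z - 1) * of_real (ln t))) m \<alpha> (\<lambda>j. b j - 1)
    = circle_mellin c R (\<lambda>u. g u / (\<Prod>j<m. (u - \<alpha> j) ^ b j)) (-1) t"
proof -
  have "conf_divdiff (\<lambda>z. g z * exp ((- z - 1) * of_real (ln t))) m \<alpha> (\<lambda>j. b j - 1)
      = contour_integral (circlepath (complex_of_real c) R)
          (\<lambda>u. g u * exp ((- u - 1) * of_real (ln t)) / (\<Prod>j<m. (u - \<alpha> j) ^ Suc (b j - 1))) / (2 * pi * \<i>)"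
    using inj nodes R by (intro conf_divdiff_eq_contour_integral holomorphic_intros g) auto
  also have "(\<lambda>u. g u * exp ((- u - 1) * of_real (ln t)) / (\<Prod>j<m. (u - \<alpha> j) ^ Suc (b j - 1)))
      = (\<lambda>u. g u / (\<Prod>j<m. (u - \<alpha> j) ^ b j) * exp ((of_real (-1) - u) * of_real (ln t)))"
  proof
    fix u
    have "(\<Prod>j<m. (u - \<alpha> j) ^ Suc (b j - 1)) = (\<Prod>j<m. (u - \<alpha> j) ^ b j)"
      using b by (intro prod.cong refl arg_cong[where f = "power _"]) auto
    moreover have "exp ((- u - 1) * of_real (ln t)) = exp ((of_real (-1) - u) * of_real (ln t))"
      by (intro arg_cong[where f = exp] arg_cong[where f = "\<lambda>x. x * _"]) simp
    ultimately show "g u * exp ((- u - 1) * of_real (ln t)) / (\<Prod>j<m. (u - \<alpha> j) ^ Suc (b j - 1))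
        = g u / (\<Prod>j<m. (u - \<alpha> j) ^ b j) * exp ((of_real (-1) - u) * of_real (ln t))"
      by (simp only: times_divide_eq_left)
  qed
  finally show ?thesis
    by (simp add: circle_mellin_def)
qed

lemma circle_mellin_rational_moment:
  fixes P Q :: "complex poly"
  assumes deg: "Q = 0 \<or> degree Q < degree P" and R: "R > 0" and left: "c + R < 0"
    and roots: "\<And>z. poly P z = 0 \<Longrightarrow> dist (complex_of_real c) z < R"
  shows "(LINT t:{0<..1}|lborel. of_real (t ^ n) * circle_mellin c R (\<lambda>u. poly Q u / poly P u) (-1) t)
    = poly Q (of_nat n) / poly P (of_nat n)"
proof -
  define f where "f = (\<lambda>u. poly Q u / poly P u)"
  have f_cont: "continuous_on (sphere (complex_of_real c) R) f"
    unfolding f_def by (intro continuous_intros) (use roots in force)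
  have "(LINT t:{0<..1}|lborel. of_real (t ^ n) * circle_mellin c R f (-1) t)
      = (LINT t:{0<..1}|lborel. circle_mellin c R f (real n - 1) t)"
    using circle_mellin_mult_power[OF f_cont] R
    by (intro set_lebesgue_integral_cong) auto
  also have "\<dots> = contour_integral (circlepath (complex_of_real c) R) (\<lambda>u. f u / (of_nat n - u)) / (2 * pi * \<i>)"
    using set_integral_circle_mellin[OF f_cont R, of "real n"] left by simp
  also have "contour_integral (circlepath (complex_of_real c) R) (\<lambda>u. f u / (of_nat n - u))
      = 2 * pi * \<i> * (poly Q (of_nat n) / poly P (of_nat n))"
  proof (cases "Q = 0")
    case False
    have "dist (complex_of_real c) (of_nat n) = norm (complex_of_real (real n - c))"
      by (simp add: dist_norm norm_minus_commute)
    also have "\<dots> = real n - c"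
      using left R by (simp only: norm_of_real)
    finally have "dist (complex_of_real c) (of_nat n) > R"
      using left by linarith
    then show ?thesis
      using False deg roots R contour_integral_circlepath_rational_pole_outside[of Q P R c "of_nat n"]
      by (simp add: f_def divide_divide_eq_left)
  qed (simp add: f_def)
  finally show ?thesis
    by (simp add: f_def)
qed

lemma circle_mellin_rational_weight:
  fixes P Q :: "complex poly"
  assumes R: "R > 0" and left: "c + R < 0"
    and roots: "\<And>z. poly P z = 0 \<Longrightarrow> dist (complex_of_real c) z < R"
    and real: "\<And>i. coeff P i \<in> \<real>" "\<And>i. coeff Q i \<in> \<real>"
    and deg: "Q = 0 \<or> degree Q < degree P"
  defines "w \<equiv> circle_mellin c R (\<lambda>u. poly Q u / poly P u) (-1)"
  shows "(\<forall>t\<in>{0<..1}. w t \<in> \<real>) \<and> continuous_on {0<..1} w \<and> set_integrable lborel {0<..1} w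
    \<and> (\<forall>n. (LINT t:{0<..1}|lborel. of_real (t ^ n) * w t) = poly Q (of_nat n) / poly P (of_nat n))"
proof (intro conjI ballI allI)
  have f_cont: "continuous_on (sphere (complex_of_real c) R) (\<lambda>u. poly Q u / poly P u)"
    by (intro continuous_intros) (use roots in force)
  show "w t \<in> \<real>" for t
    unfolding w_def using real by (intro circle_mellin_real) (simp add: poly_cnj_real)
  show "continuous_on {0<..1} w"
    unfolding w_def using R by (intro continuous_on_subset[OF continuous_on_circle_mellin[OF f_cont]]) auto
  show "set_integrable lborel {0<..1} w"
    unfolding w_def using R left by (intro set_integrable_circle_mellin f_cont) auto
  show "(LINT t:{0<..1}|lborel. of_real (t ^ n) * w t) = poly Q (of_nat n) / poly P (of_nat n)" for n
    unfolding w_def using deg R left roots by (rule circle_mellin_rational_moment)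
qed

lemma poly_map_poly_of_real_of_nat:
  "poly (map_poly complex_of_real p) (of_nat n) = complex_of_real (poly p (real n))"
  by (induction p) (auto simp: map_poly_pCons)

theorem mainTheorem2:
  fixes p q :: "real poly" and m :: nat and \<alpha> :: "nat \<Rightarrow> complex" and b :: "nat \<Rightarrow> nat"
    and w :: "real \<Rightarrow> complex"
  assumes distinct: "inj_on \<alpha> {..<m}"
    and neg: "\<forall>j<m. Re (\<alpha> j) < 0"
    and bpos: "\<forall>j<m. b j \<ge> 1"
    and p_def: "map_poly complex_of_real p = (\<Prod>j<m. [:- \<alpha> j, 1:] ^ b j)"
    and deg: "q = 0 \<or> degree q < degree p"
    and coprime: "\<forall>z. poly (map_poly complex_of_real p) z = 0 \<longrightarrow> poly (map_poly complex_of_real q) z \<noteq> 0"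
    and w_def: "\<And>t. w t = conf_divdiff
        (\<lambda>z. poly (map_poly complex_of_real q) z * exp ((- z - 1) * complex_of_real (ln t)))
        m \<alpha> (\<lambda>j. b j - 1)"
  shows "(\<forall>t\<in>{0<..1}. w t \<in> \<real>)
    \<and> continuous_on {0<..1} w
    \<and> set_integrable lborel {0<..(1::real)} w
    \<and> (\<forall>n::nat. complex_of_real (poly q (real n) / poly p (real n))
          = (LINT t:{0<..1}|lborel. complex_of_real (t ^ n) * w t))"
proof -
  define P where "P = map_poly complex_of_real p"
  define Q where "Q = map_poly complex_of_real q"
  obtain c R where R: "R > 0" and left: "c + R < 0" and nodes: "\<alpha> ` {..<m} \<subseteq> ball (complex_of_real c) R"
    using exists_disc_in_left_half_plane[of "\<alpha> ` {..<m}"] neg by auto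
  have poly_P: "poly P u = (\<Prod>j<m. (u - \<alpha> j) ^ b j)" for u
    by (simp add: P_def p_def poly_prod)
  have "poly Q holomorphic_on UNIV"
    by (intro holomorphic_intros)
  from conf_divdiff_eq_circle_mellin[OF this distinct nodes R bpos]
  have "w = circle_mellin c R (\<lambda>u. poly Q u / poly P u) (-1)"
    by (simp add: fun_eq_iff w_def poly_P Q_def)
  moreover have "dist (complex_of_real c) z < R" if "poly P z = 0" for z
    using that nodes by (auto simp: poly_P)
  moreover have "Q = 0 \<or> degree Q < degree P"
    using deg by (auto simp: P_def Q_def degree_map_poly)
  ultimately show ?thesis
    using circle_mellin_rational_weight[OF R left, of P Q]
    by (simp add: P_def Q_def coeff_map_poly poly_map_poly_of_real_of_nat)
qed

end
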